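(* For every closed recHML formula $\varphi$, $[\![\varphi]\!]_F\cap\mathrm{Act}^\omega=[\![\varphi]\!]_L$.
   Context: Fix a finite set $\mathrm{Act}$ of actions. recHML formulae: $\varphi::=\mathrm{tt}\mid\mathrm{ff}\mid\varphi\vee\varphi\mid\varphi\wedge\varphi\mid\langle A\rangle\varphi\mid[A]\varphi\mid\min X.\varphi\mid\max X.\varphi\mid X$ ($A\subseteq\mathrm{Act}$), guarded. For a set of traces $D$ (either $D=\mathrm{Act}^\omega$, giving the linear-time semantics $[\![\cdot]\!]_L$, or $D=\mathrm{Fin}=\mathrm{Act}^\omega\cup\mathrm{Act}^*$, giving the finfinite semantics $[\![\cdot]\!]_F$) and an environment $\sigma$ from variables to subsets of $D$: $[\![\mathrm{tt}]\!]=D$, $[\![\mathrm{ff}]\!]=\emptyset$, $\vee,\wedge$ are union/intersection, $[\![\langle A\rangle\varphi,\sigma]\!]=\{ag\in D\mid a\in A,g\in[\![\varphi,\sigma]\!]\}$, $[\![[A]\varphi,\sigma]\!]=\{g\in D\mid\forall a\in A,\forall g'.\ g=ag'\Rightarrow g'\in[\![\varphi,\sigma]\!]\}$, $[\![\min X.\varphi,\sigma]\!]=\bigcap\{S\subseteq D\mid[\![\varphi,\sigma[X\mapsto S]]\!]\subseteq S\}$, $[\![\max X.\varphi,\sigma]\!]=\bigcup\{S\subseteq D\mid S\subseteq[\![\varphi,\sigma[X\mapsto S]]\!]\}$, $[\![X,\sigma]\!]=\sigma(X)$. *)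

theory Defs
  imports Main "HOL-Library.Stream"
begin

datatype ('a, 'x) form =
    TT | FF
  | Or "('a, 'x) form" "('a, 'x) form"
  | And "('a, 'x) form" "('a, 'x) form"
  | Dia "'a set" "('a, 'x) form"
  | Box "'a set" "('a, 'x) form"
  | Min 'x "('a, 'x) form"
  | Max 'x "('a, 'x) form"
  | Var 'x

fun fv :: "('a, 'x) form \<Rightarrow> 'x set" where
  "fv TT = {}" | "fv FF = {}"
| "fv (Or p q) = fv p \<union> fv q"
| "fv (And p q) = fv p \<union> fv q"
| "fv (Dia A p) = fv p"
| "fv (Box A p) = fv p"
| "fv (Min X p) = fv p - {X}"
| "fv (Max X p) = fv p - {X}"
| "fv (Var X) = {X}"

definition closed :: "('a, 'x) form \<Rightarrow> bool" where
  "closed p \<longleftrightarrow> fv p = {}"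

fun guarded_in :: "'x \<Rightarrow> ('a, 'x) form \<Rightarrow> bool" where
  "guarded_in X TT = True" | "guarded_in X FF = True"
| "guarded_in X (Or p q) = (guarded_in X p \<and> guarded_in X q)"
| "guarded_in X (And p q) = (guarded_in X p \<and> guarded_in X q)"
| "guarded_in X (Dia A p) = True"
| "guarded_in X (Box A p) = True"
| "guarded_in X (Min Y p) = (X = Y \<or> guarded_in X p)"
| "guarded_in X (Max Y p) = (X = Y \<or> guarded_in X p)"
| "guarded_in X (Var Y) = (X \<noteq> Y)"

fun guarded :: "('a, 'x) form \<Rightarrow> bool" where
  "guarded TT = True" | "guarded FF = True"
| "guarded (Or p q) = (guarded p \<and> guarded q)"
| "guarded (And p q) = (guarded p \<and> guarded q)"
| "guarded (Dia A p) = guarded p"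
| "guarded (Box A p) = guarded p"
| "guarded (Min X p) = (guarded_in X p \<and> guarded p)"
| "guarded (Max X p) = (guarded_in X p \<and> guarded p)"
| "guarded (Var X) = True"

fun semL :: "('a, 'x) form \<Rightarrow> ('x \<Rightarrow> 'a stream set) \<Rightarrow> 'a stream set" where
  "semL TT \<sigma> = UNIV"
| "semL FF \<sigma> = {}"
| "semL (Or p q) \<sigma> = semL p \<sigma> \<union> semL q \<sigma>"
| "semL (And p q) \<sigma> = semL p \<sigma> \<inter> semL q \<sigma>"
| "semL (Dia A p) \<sigma> = {a ## g | a g. a \<in> A \<and> g \<in> semL p \<sigma>}"
| "semL (Box A p) \<sigma> = {g. \<forall>a\<in>A. \<forall>g'. g = a ## g' \<longrightarrow> g' \<in> semL p \<sigma>}"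
| "semL (Min X p) \<sigma> = \<Inter>{S. semL p (\<sigma>(X := S)) \<subseteq> S}"
| "semL (Max X p) \<sigma> = \<Union>{S. S \<subseteq> semL p (\<sigma>(X := S))}"
| "semL (Var X) \<sigma> = \<sigma> X"

datatype 'a ftrace = FinT "'a list" | InfT "'a stream"

fun fcons :: "'a \<Rightarrow> 'a ftrace \<Rightarrow> 'a ftrace" where
  "fcons a (FinT l) = FinT (a # l)"
| "fcons a (InfT s) = InfT (a ## s)"

fun semF :: "('a, 'x) form \<Rightarrow> ('x \<Rightarrow> 'a ftrace set) \<Rightarrow> 'a ftrace set" where
  "semF TT \<sigma> = UNIV"
| "semF FF \<sigma> = {}"
| "semF (Or p q) \<sigma> = semF p \<sigma> \<union> semF q \<sigma>"
| "semF (And p q) \<sigma> = semF p \<sigma> \<inter> semF q \<sigma>"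
| "semF (Dia A p) \<sigma> = {fcons a g | a g. a \<in> A \<and> g \<in> semF p \<sigma>}"
| "semF (Box A p) \<sigma> = {g. \<forall>a\<in>A. \<forall>g'. g = fcons a g' \<longrightarrow> g' \<in> semF p \<sigma>}"
| "semF (Min X p) \<sigma> = \<Inter>{S. semF p (\<sigma>(X := S)) \<subseteq> S}"
| "semF (Max X p) \<sigma> = \<Union>{S. S \<subseteq> semF p (\<sigma>(X := S))}"
| "semF (Var X) \<sigma> = \<sigma> X"

end

theory Submission
  imports Defs
begin

text \<open>On infinite traces the finfinite semantics agrees with the linear-time one because
restriction to infinite traces commutes with every connective, and it also commutes with
least and greatest fixed points: the restriction map preserves all unions and intersections,
so it has both a right adjoint (add all finite traces) and a left adjoint (embed the streams),
and fixed points transfer along such adjunctions.\<close>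

lemma lfp_transfer_lower_adjoint:
  fixes \<alpha> :: "'a::complete_lattice \<Rightarrow> 'b::complete_lattice"
  assumes "mono f" "mono g"
    and commute: "\<And>x. \<alpha> (f x) = g (\<alpha> x)"
    and adjoint: "\<And>x y. \<alpha> x \<le> y \<longleftrightarrow> x \<le> \<rho> y"
  shows "\<alpha> (lfp f) = lfp g"
proof (rule antisym)
  have "\<alpha> (f (\<rho> (lfp g))) \<le> lfp g"
  proof -
    have "\<alpha> (\<rho> (lfp g)) \<le> lfp g" using adjoint by blast
    then have "g (\<alpha> (\<rho> (lfp g))) \<le> g (lfp g)" by (rule monoD[OF \<open>mono g\<close>])
    then show ?thesis by (simp add: commute lfp_fixpoint[OF \<open>mono g\<close>])
  qed
  then have "lfp f \<le> \<rho> (lfp g)" by (simp add: adjoint lfp_lowerbound)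
  then show "\<alpha> (lfp f) \<le> lfp g" by (simp add: adjoint)
next
  show "lfp g \<le> \<alpha> (lfp f)"
    by (rule lfp_lowerbound) (simp add: commute[symmetric] lfp_fixpoint[OF \<open>mono f\<close>])
qed

lemma gfp_transfer_upper_adjoint:
  fixes \<alpha> :: "'a::complete_lattice \<Rightarrow> 'b::complete_lattice"
  assumes "mono f" "mono g"
    and commute: "\<And>x. \<alpha> (f x) = g (\<alpha> x)"
    and adjoint: "\<And>x y. \<beta> y \<le> x \<longleftrightarrow> y \<le> \<alpha> x"
  shows "\<alpha> (gfp f) = gfp g"
proof (rule antisym)
  show "\<alpha> (gfp f) \<le> gfp g"
    by (rule gfp_upperbound) (simp add: commute[symmetric] gfp_fixpoint[OF \<open>mono f\<close>])
next
  have "gfp g \<le> \<alpha> (f (\<beta> (gfp g)))"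
  proof -
    have "gfp g \<le> \<alpha> (\<beta> (gfp g))" using adjoint by blast
    then have "g (gfp g) \<le> g (\<alpha> (\<beta> (gfp g)))" by (rule monoD[OF \<open>mono g\<close>])
    then show ?thesis by (simp add: commute gfp_fixpoint[OF \<open>mono g\<close>])
  qed
  then have "\<beta> (gfp g) \<le> gfp f" by (simp add: adjoint[symmetric] gfp_upperbound)
  then show "gfp g \<le> \<alpha> (gfp f)" by (simp add: adjoint)
qed

lemma semF_mono: "(\<And>X. \<sigma> X \<subseteq> \<sigma>' X) \<Longrightarrow> semF p \<sigma> \<subseteq> semF p \<sigma>'"
proof (induction p arbitrary: \<sigma> \<sigma>')
  case (Min X p)
  then have "semF p (\<sigma>(X := S)) \<subseteq> semF p (\<sigma>'(X := S))" for S by simp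
  then show ?case unfolding semF.simps by (intro Inf_superset_mono) blast
next
  case (Max X p)
  then have "semF p (\<sigma>(X := S)) \<subseteq> semF p (\<sigma>'(X := S))" for S by simp
  then show ?case unfolding semF.simps by (intro Sup_subset_mono) blast
qed (simp_all, blast+)

lemma semL_mono: "(\<And>X. \<sigma> X \<subseteq> \<sigma>' X) \<Longrightarrow> semL p \<sigma> \<subseteq> semL p \<sigma>'"
proof (induction p arbitrary: \<sigma> \<sigma>')
  case (Min X p)
  then have "semL p (\<sigma>(X := S)) \<subseteq> semL p (\<sigma>'(X := S))" for S by simp
  then show ?case unfolding semL.simps by (intro Inf_superset_mono) blast
next
  case (Max X p)
  then have "semL p (\<sigma>(X := S)) \<subseteq> semL p (\<sigma>'(X := S))" for S by simp
  then show ?case unfolding semL.simps by (intro Sup_subset_mono) blast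
qed (simp_all, blast+)

definition inf_traces :: "'a ftrace set \<Rightarrow> 'a stream set" where
  "inf_traces T = {s. InfT s \<in> T}"

lemma inf_traces_le_iff: "inf_traces T \<subseteq> S \<longleftrightarrow> T \<subseteq> InfT ` S \<union> range FinT"
proof -
  have "t \<in> InfT ` S \<union> range FinT \<longleftrightarrow> (\<forall>s. t = InfT s \<longrightarrow> s \<in> S)" for t
    by (cases t) auto
  then show ?thesis unfolding inf_traces_def subset_iff by blast
qed

lemma le_inf_traces_iff: "InfT ` S \<subseteq> T \<longleftrightarrow> S \<subseteq> inf_traces T"
  by (auto simp: inf_traces_def)

lemma InfT_eq_fcons_iff: "InfT s = fcons a g \<longleftrightarrow> (\<exists>s'. g = InfT s' \<and> s = a ## s')"
  by (cases g) auto

lemma inf_traces_semF: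
  assumes "\<And>X. X \<in> fv p \<Longrightarrow> inf_traces (\<sigma>F X) = \<sigma>L X"
  shows "inf_traces (semF p \<sigma>F) = semL p \<sigma>L"
  using assms
proof (induction p arbitrary: \<sigma>F \<sigma>L)
  case (Dia A p)
  then have IH: "inf_traces (semF p \<sigma>F) = semL p \<sigma>L" by simp
  show ?case
  proof (intro set_eqI iffI)
    fix s assume "s \<in> inf_traces (semF (Dia A p) \<sigma>F)"
    then show "s \<in> semL (Dia A p) \<sigma>L"
      using IH by (auto simp: inf_traces_def InfT_eq_fcons_iff)
  next
    fix s assume "s \<in> semL (Dia A p) \<sigma>L"
    then obtain a s' where "s = a ## s'" "a \<in> A" "InfT s' \<in> semF p \<sigma>F"
      using IH by (auto simp: inf_traces_def)
    then show "s \<in> inf_traces (semF (Dia A p) \<sigma>F)"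
      by (auto simp: inf_traces_def intro!: exI[of _ "InfT s'"])
  qed
next
  case (Min X p)
  have "inf_traces (semF p (\<sigma>F(X := S))) = semL p (\<sigma>L(X := inf_traces S))" for S
    by (rule Min.IH) (use Min.prems in auto)
  then have "inf_traces (lfp (\<lambda>S. semF p (\<sigma>F(X := S)))) = lfp (\<lambda>S. semL p (\<sigma>L(X := S)))"
    by (intro lfp_transfer_lower_adjoint[OF _ _ _ inf_traces_le_iff] monoI semF_mono semL_mono)
      auto
  then show ?case by (simp add: lfp_def)
next
  case (Max X p)
  have "inf_traces (semF p (\<sigma>F(X := S))) = semL p (\<sigma>L(X := inf_traces S))" for S
    by (rule Max.IH) (use Max.prems in auto)
  then have "inf_traces (gfp (\<lambda>S. semF p (\<sigma>F(X := S)))) = gfp (\<lambda>S. semL p (\<sigma>L(X := S)))"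
    by (intro gfp_transfer_upper_adjoint[OF _ _ _ le_inf_traces_iff] monoI semF_mono semL_mono)
      auto
  then show ?case by (simp add: gfp_def)
next
  case (Or p q)
  then have "inf_traces (semF p \<sigma>F) = semL p \<sigma>L" "inf_traces (semF q \<sigma>F) = semL q \<sigma>L"
    by simp_all
  then show ?case by (auto simp: inf_traces_def)
next
  case (And p q)
  then have "inf_traces (semF p \<sigma>F) = semL p \<sigma>L" "inf_traces (semF q \<sigma>F) = semL q \<sigma>L"
    by simp_all
  then show ?case by (auto simp: inf_traces_def)
next
  case (Box A p)
  then have "inf_traces (semF p \<sigma>F) = semL p \<sigma>L" by simp
  then show ?case by (auto simp: inf_traces_def InfT_eq_fcons_iff)
qed (simp_all add: inf_traces_def)

theorem mainTheorem13:
  fixes \<phi> :: "('a::finite, 'x) form"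
    and \<sigma>F :: "'x \<Rightarrow> 'a ftrace set"
    and \<sigma>L :: "'x \<Rightarrow> 'a stream set"
  assumes "closed \<phi>" and "guarded \<phi>"
  shows "{s. InfT s \<in> semF \<phi> \<sigma>F} = semL \<phi> \<sigma>L"
  using inf_traces_semF[of \<phi> \<sigma>F \<sigma>L] \<open>closed \<phi>\<close> by (simp add: closed_def inf_traces_def)

end
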